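(* Let $f:\mathbb{R}_+\to\mathbb{R}$ be a real-valued function with $f\in GM$. If the improper integral $\int_0^\infty f(t)\,dt$ converges, then $t f(t)\to 0$ as $t\to\infty$.
   Context: $\mathbb{R}_+=[0,\infty)$. All functions $f:\mathbb{R}_+\to\mathbb{C}$ considered are locally integrable, locally of bounded variation on $(0,\infty)$, and satisfy $f(t)\to 0$ as $t\to\infty$. Integrals over infinite intervals (and integrals $\int_0^\infty$) are understood as improper Riemann (Riemann–Stieltjes) integrals. Such an $f$ is called general monotone, written $f\in GM$, if there exist constants $C>1$ and $\lambda>1$ such that for every $x>0$, $$\int_x^{2x}|df(t)|\le C\int_{x/\lambda}^{\lambda x}\frac{|f(t)|}{t}\,dt,$$ where $|df|$ denotes the total variation measure of $f$. *)

theory Defs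
  imports "HOL-Analysis.Analysis"
begin

definition variation_sums :: "(real \<Rightarrow> real) \<Rightarrow> real \<Rightarrow> real \<Rightarrow> real set" where
  "variation_sums f a b =
     {(\<Sum>i<n. \<bar>f (t (Suc i)) - f (t i)\<bar>) | n t.
        t 0 = a \<and> t n = b \<and> (\<forall>i<n. t i \<le> t (Suc i))}"

definition bv_on :: "(real \<Rightarrow> real) \<Rightarrow> real \<Rightarrow> real \<Rightarrow> bool" where
  "bv_on f a b \<longleftrightarrow> bdd_above (variation_sums f a b)"

text \<open>Total variation of f on [a,b], i.e. the Stieltjes integral of |df| over [a,b].\<close>
definition total_variation :: "(real \<Rightarrow> real) \<Rightarrow> real \<Rightarrow> real \<Rightarrow> real" where
  "total_variation f a b = Sup (variation_sums f a b)"

definition GM :: "(real \<Rightarrow> real) \<Rightarrow> bool" where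
  "GM f \<longleftrightarrow>
     (\<forall>b\<ge>0. f absolutely_integrable_on {0..b}) \<and>
     (\<forall>a b. 0 < a \<longrightarrow> a \<le> b \<longrightarrow> bv_on f a b) \<and>
     (f \<longlongrightarrow> 0) at_top \<and>
     (\<exists>C>1. \<exists>lam>1. \<forall>x>0.
        total_variation f x (2 * x) \<le> C * integral {x / lam .. lam * x} (\<lambda>t. \<bar>f t\<bar> / t))"

end

theory Submission
  imports Defs
begin

text \<open>
  Take \<open>M = 2^p \<ge> \<lambda>\<close> and the window mass \<open>\<Psi> x\<close>, the integral of \<open>\<bar>f\<bar>\<close> over \<open>[x/M, M x]\<close>.
  The GM condition bounds the variation of \<open>f\<close> on \<open>[x, 2x]\<close> by \<open>C M \<Psi> x / x\<close>, hence
  \<open>\<bar>x f x\<bar> \<le> (1 + C M) \<Psi> x\<close>, and it remains to show \<open>\<Psi> x \<rightarrow> 0\<close>. Cut \<open>[y, 2y]\<close> into \<open>n\<close> equal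
  pieces: on each, the integral of \<open>\<bar>f\<bar>\<close> is at most the absolute value of the integral of \<open>f\<close>
  (at most \<open>\<epsilon>\<close> for large \<open>y\<close>, by the Cauchy criterion for the convergent integral) plus the
  length times the variation, and the variations add up to at most \<open>C M \<Psi> y / y\<close>. Covering
  \<open>[x/M, M x]\<close> by \<open>2p\<close> dyadic blocks gives \<open>\<Psi> x \<le> 2pn\<epsilon> + \<theta> sup \<Psi>\<close> over \<open>[x/M, M x]\<close> with
  \<open>\<theta> = 2pCM/n\<close>. For \<open>n\<close> so large that \<open>\<theta> M \<le> 1/2\<close>, this contracting recursion, together with
  the a priori linear growth of \<open>\<Psi>\<close>, forces \<open>limsup \<Psi> \<le> 4pn\<epsilon>\<close>.
\<close>

lemma variation_sumsI:
  assumes "t 0 = a" "t n = b" "\<forall>i<n. t i \<le> t (Suc i)"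
  shows "(\<Sum>i<n. \<bar>f (t (Suc i)) - f (t i)\<bar>) \<in> variation_sums f a b"
  using assms unfolding variation_sums_def by blast

lemma variation_sums_nonempty: "a \<le> b \<Longrightarrow> variation_sums f a b \<noteq> {}"
  using variation_sumsI[of "\<lambda>i. if i = 0 then a else b" a 1 b f] by auto

lemma abs_diff_le_total_variation:
  assumes bv: "bv_on f a b" and s: "a \<le> s" "s \<le> b" and t: "a \<le> t" "t \<le> b"
  shows "\<bar>f t - f s\<bar> \<le> total_variation f a b"
proof -
  define p where
    "p = (\<lambda>i::nat. if i = 0 then a else if i = 1 then min s t else if i = 2 then max s t else b)"
  have "(\<Sum>i<3. \<bar>f (p (Suc i)) - f (p i)\<bar>) \<in> variation_sums f a b"
    by (rule variation_sumsI) (use s t in \<open>auto simp: p_def less_Suc_eq\<close>)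
  hence "(\<Sum>i<3. \<bar>f (p (Suc i)) - f (p i)\<bar>) \<le> total_variation f a b"
    using bv unfolding total_variation_def bv_on_def by (intro cSup_upper)
  moreover have "\<bar>f t - f s\<bar> \<le> (\<Sum>i<3. \<bar>f (p (Suc i)) - f (p i)\<bar>)"
    by (simp add: p_def numeral_3_eq_3 lessThan_Suc min_def max_def abs_minus_commute)
  ultimately show ?thesis by linarith
qed

lemma total_variation_nonneg: "bv_on f a b \<Longrightarrow> a \<le> b \<Longrightarrow> 0 \<le> total_variation f a b"
  using abs_diff_le_total_variation[of f a b a a] by simp

lemma variation_sums_append:
  assumes "s1 \<in> variation_sums f a b" "s2 \<in> variation_sums f b c"
  shows "s1 + s2 \<in> variation_sums f a c"
proof -
  obtain n1 t1 where 1: "s1 = (\<Sum>i<n1. \<bar>f (t1 (Suc i)) - f (t1 i)\<bar>)" "t1 0 = a" "t1 n1 = b"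
    "\<forall>i<n1. t1 i \<le> t1 (Suc i)" using assms(1) unfolding variation_sums_def by blast
  obtain n2 t2 where 2: "s2 = (\<Sum>i<n2. \<bar>f (t2 (Suc i)) - f (t2 i)\<bar>)" "t2 0 = b" "t2 n2 = c"
    "\<forall>i<n2. t2 i \<le> t2 (Suc i)" using assms(2) unfolding variation_sums_def by blast
  define t where "t = (\<lambda>i. if i \<le> n1 then t1 i else t2 (i - n1))"
  have t_shift: "t (n1 + k) = t2 k" for k using 1 2 by (cases k) (auto simp: t_def)
  have sum_split: "(\<Sum>i<n1+n2. g i) = (\<Sum>i<n1. g i) + (\<Sum>k<n2. g (n1+k))" for g :: "nat \<Rightarrow> real"
    by (induction n2) (simp_all add: add_ac)
  have "(\<Sum>i<n1+n2. \<bar>f (t (Suc i)) - f (t i)\<bar>) = s1 + s2"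
    unfolding sum_split 1 2 using t_shift[of "Suc _"] t_shift
    by (intro arg_cong2[where f = "(+)"] sum.cong) (auto simp: t_def)
  moreover have "\<forall>i<n1+n2. t i \<le> t (Suc i)"
  proof (intro allI impI)
    fix i assume i: "i < n1 + n2"
    show "t i \<le> t (Suc i)"
    proof (cases "i < n1")
      case True thus ?thesis using 1 by (auto simp: t_def)
    next
      case False
      then obtain k where "i = n1 + k" "k < n2" using i by (metis add_less_imp_less_left le_Suc_ex not_less)
      thus ?thesis using t_shift[of k] t_shift[of "Suc k"] 2 by simp
    qed
  qed
  moreover have "t 0 = a" "t (n1+n2) = c" using 1 2 t_shift[of n2] by (auto simp: t_def)
  ultimately show ?thesis using variation_sumsI[of t a "n1+n2" c f] by simp
qed

lemma total_variation_add_le: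
  assumes "a \<le> b" "b \<le> c" "bv_on f a b" "bv_on f b c" "bv_on f a c"
  shows "total_variation f a b + total_variation f b c \<le> total_variation f a c"
proof -
  have sum_le: "s1 + s2 \<le> total_variation f a c"
    if "s1 \<in> variation_sums f a b" "s2 \<in> variation_sums f b c" for s1 s2
    using variation_sums_append[OF that] assms(5) unfolding total_variation_def bv_on_def
    by (intro cSup_upper)
  have "total_variation f a b \<le> total_variation f a c - s2" if "s2 \<in> variation_sums f b c" for s2
    unfolding total_variation_def using variation_sums_nonempty[OF assms(1)] sum_le[OF _ that]
    by (intro cSup_least) (auto simp: total_variation_def le_diff_eq)
  hence "total_variation f b c \<le> total_variation f a c - total_variation f a b"
    unfolding total_variation_def using variation_sums_nonempty[OF assms(2)]
    by (intro cSup_least) (auto simp: total_variation_def le_diff_eq add.commute)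
  thus ?thesis by simp
qed

lemma sum_total_variation_le:
  assumes bv: "\<And>u v. a 0 \<le> u \<Longrightarrow> u \<le> v \<Longrightarrow> bv_on f u v"
    and mono: "\<And>j. a j \<le> a (Suc j)"
  shows "(\<Sum>j<N. total_variation f (a j) (a (Suc j))) \<le> total_variation f (a 0) (a N)"
proof (induction N)
  case 0 show ?case using total_variation_nonneg[OF bv] by simp
next
  case (Suc N)
  have le: "a 0 \<le> a N" for N by (induction N) (auto intro: order_trans mono)
  have "(\<Sum>j<Suc N. total_variation f (a j) (a (Suc j))) \<le>
      total_variation f (a 0) (a N) + total_variation f (a N) (a (Suc N))" using Suc by simp
  also have "\<dots> \<le> total_variation f (a 0) (a (Suc N))"
    by (rule total_variation_add_le) (use le[of N] le[of "Suc N"] mono[of N] in \<open>auto intro!: bv\<close>)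
  finally show ?case .
qed

lemma integral_sum_adjacent_intervals:
  fixes g :: "real \<Rightarrow> real"
  assumes mono: "\<And>j. a j \<le> a (Suc j)"
    and int: "\<And>u v. a 0 \<le> u \<Longrightarrow> u \<le> v \<Longrightarrow> g integrable_on {u..v}"
  shows "integral {a 0..a N} g = (\<Sum>j<N. integral {a j..a (Suc j)} g)"
proof (induction N)
  case 0 show ?case by simp
next
  case (Suc N)
  have le: "a 0 \<le> a N" for N by (induction N) (auto intro: order_trans mono)
  have "integral {a 0..a N} g + integral {a N..a (Suc N)} g = integral {a 0..a (Suc N)} g"
    by (rule Henstock_Kurzweil_Integration.integral_combine)
      (use le[of N] mono[of N] le[of "Suc N"] in \<open>auto intro!: int\<close>)
  thus ?case using Suc by simp
qed

lemma integral_abs_le_abs_integral_add_variation: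
  fixes f :: "real \<Rightarrow> real"
  assumes ab: "a \<le> b" and bv: "bv_on f a b" and int: "(\<lambda>t. \<bar>f t\<bar>) integrable_on {a..b}"
  shows "integral {a..b} (\<lambda>t. \<bar>f t\<bar>) \<le> \<bar>integral {a..b} f\<bar> + (b - a) * total_variation f a b"
proof -
  have slack: "0 \<le> (b - a) * total_variation f a b"
    using total_variation_nonneg[OF bv ab] ab by simp
  consider "\<forall>t\<in>{a..b}. 0 \<le> f t" | "\<forall>t\<in>{a..b}. f t \<le> 0"
    | s r where "s \<in> {a..b}" "r \<in> {a..b}" "f s < 0" "f r > 0"
    by (meson not_le)
  thus ?thesis
  proof cases
    case 1
    hence "integral {a..b} (\<lambda>t. \<bar>f t\<bar>) = integral {a..b} f" by (intro integral_cong) auto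
    thus ?thesis using slack by linarith
  next
    case 2
    hence "integral {a..b} (\<lambda>t. \<bar>f t\<bar>) = integral {a..b} (\<lambda>t. - f t)" by (intro integral_cong) auto
    thus ?thesis using slack by simp
  next
    case 3
    \<comment> \<open>f changes sign, so every value is within the variation of a value of the opposite sign\<close>
    have "\<bar>f t\<bar> \<le> total_variation f a b" if "t \<in> {a..b}" for t
      using abs_diff_le_total_variation[OF bv, of s t] abs_diff_le_total_variation[OF bv, of t r] 3 that
      by (cases "f t \<ge> 0") auto
    hence "integral {a..b} (\<lambda>t. \<bar>f t\<bar>) \<le> integral {a..b} (\<lambda>t. total_variation f a b)"
      by (intro integral_le int) auto
    thus ?thesis using ab by simp
  qed
qed

locale contracting_recursion =
  fixes \<Psi> :: "real \<Rightarrow> real" and M X1 K A \<theta> :: real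
  assumes M_ge_1: "1 \<le> M" and X1_pos: "0 < X1" and nonneg: "\<And>x. 0 \<le> \<Psi> x"
    and linear_bound: "\<And>x. X1 \<le> x \<Longrightarrow> \<Psi> x \<le> K * x"
    and recursion:
      "\<And>x B. X1 \<le> x \<Longrightarrow> (\<And>y. x / M \<le> y \<Longrightarrow> y \<le> M * x \<Longrightarrow> \<Psi> y \<le> B) \<Longrightarrow> \<Psi> x \<le> A + \<theta> * B"
    and contraction: "\<theta> * M \<le> 1/2" and A_nonneg: "0 \<le> A"
begin

lemma K_nonneg: "0 \<le> K"
proof -
  have "0 \<le> K * X1" using linear_bound[of X1] nonneg[of X1] by linarith
  thus ?thesis using X1_pos by (simp add: zero_le_mult_iff)
qed

lemma weighted_bound_improve:
  assumes R: "0 < R" and Q: "0 \<le> Q" and hyp: "\<And>y. X1 \<le> y \<Longrightarrow> \<Psi> y \<le> Q * (1 + y / R)"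
    and x: "X1 \<le> x"
  shows "\<Psi> x \<le> max (K * M * X1) (A + Q / 2) * (1 + x / R)"
proof -
  have w: "1 \<le> 1 + x / R" using x X1_pos R by simp
  show ?thesis
  proof (cases "x \<le> M * X1")
    case True
    have "\<Psi> x \<le> K * (M * X1)" using linear_bound[OF x] mult_left_mono[OF True K_nonneg] by linarith
    also have "\<dots> \<le> max (K * M * X1) (A + Q / 2)" by (simp add: mult.assoc)
    also have "\<dots> \<le> max (K * M * X1) (A + Q / 2) * (1 + x / R)"
    proof -
      have "0 \<le> K * M * X1" using K_nonneg M_ge_1 X1_pos by simp
      hence "0 \<le> max (K * M * X1) (A + Q / 2)" by simp
      from mult_left_mono[OF w this] show ?thesis by simp
    qed
    finally show ?thesis .
  next
    case False
    have "\<Psi> y \<le> Q * M * (1 + x / R)" if y: "x / M \<le> y" "y \<le> M * x" for y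
    proof -
      have "x \<le> M * y" using y(1) M_ge_1 by (simp add: field_simps)
      hence "M * X1 < M * y" using False by linarith
      hence "X1 \<le> y" using M_ge_1 by simp
      have "y / R \<le> M * x / R" using y(2) R by (simp add: divide_right_mono)
      hence "1 + y / R \<le> M * (1 + x / R)" using M_ge_1 by (simp add: distrib_left)
      hence "Q * (1 + y / R) \<le> Q * (M * (1 + x / R))" using Q by (rule mult_left_mono)
      thus ?thesis using hyp[OF \<open>X1 \<le> y\<close>] by (simp add: mult.assoc)
    qed
    hence "\<Psi> x \<le> A + \<theta> * (Q * M * (1 + x / R))" by (rule recursion[OF x])
    moreover have "\<theta> * (Q * M * (1 + x / R)) \<le> Q / 2 * (1 + x / R)"
      using mult_right_mono[OF contraction, of "Q * (1 + x / R)"] Q w by (simp add: ac_simps)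
    moreover have "A \<le> A * (1 + x / R)" using A_nonneg w by (simp add: mult_le_cancel_left1)
    ultimately have "\<Psi> x \<le> (A + Q / 2) * (1 + x / R)" unfolding distrib_right by linarith
    also have "\<dots> \<le> max (K * M * X1) (A + Q / 2) * (1 + x / R)" using w by (intro mult_right_mono) auto
    finally show ?thesis .
  qed
qed

text \<open>
  Only linear growth of \<open>\<Psi>\<close> is known a priori, so the recursion is run on the supremum \<open>Q\<close> of
  \<open>\<Psi> x / (1 + x / R)\<close>, which is finite; it yields \<open>Q \<le> max (K * M * X1) (A + Q / 2)\<close>, a bound
  independent of \<open>R\<close>.
\<close>
lemma weighted_bound:
  assumes R: "0 < R" and x0: "X1 \<le> x0"
  shows "\<Psi> x0 \<le> max (K * M * X1) (2 * A) * (1 + x0 / R)"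
proof -
  define w where "w = (\<lambda>x. 1 + x / R)"
  define Q where "Q = Sup ((\<lambda>x. \<Psi> x / w x) ` {X1..})"
  have w: "1 \<le> w x" if "X1 \<le> x" for x using that X1_pos R by (simp add: w_def)
  have "\<Psi> x / w x \<le> K * R" if x: "X1 \<le> x" for x
  proof -
    have "\<Psi> x \<le> K * R * w x"
      using linear_bound[OF x] mult_nonneg_nonneg[OF K_nonneg, of R] R by (simp add: w_def algebra_simps)
    thus ?thesis using w[OF x] by (simp add: divide_le_eq)
  qed
  hence bdd: "bdd_above ((\<lambda>x. \<Psi> x / w x) ` {X1..})" by (auto intro!: bdd_aboveI)
  have Psi_le_Q: "\<Psi> x \<le> Q * w x" if x: "X1 \<le> x" for x
    using cSup_upper[OF _ bdd, of "\<Psi> x / w x"] x w[OF x] unfolding Q_def by (simp add: divide_le_eq)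
  have "0 \<le> \<Psi> X1 / w X1" using nonneg[of X1] w[of X1] by simp
  also have "\<dots> \<le> Q" unfolding Q_def by (rule cSup_upper[OF _ bdd]) auto
  finally have Q: "0 \<le> Q" .
  have "\<Psi> x / w x \<le> max (K * M * X1) (A + Q / 2)" if x: "X1 \<le> x" for x
    using weighted_bound_improve[OF R Q _ x] Psi_le_Q w[OF x] unfolding w_def
    by (simp add: divide_le_eq)
  hence "Q \<le> max (K * M * X1) (A + Q / 2)" by (subst Q_def, intro cSup_least) auto
  hence "Q \<le> max (K * M * X1) (2 * A)" by (auto simp: max_def split: if_splits)
  hence "Q * w x0 \<le> max (K * M * X1) (2 * A) * w x0" using w[OF x0] by (intro mult_right_mono) auto
  thus ?thesis using Psi_le_Q[OF x0] unfolding w_def by (rule order_trans[rotated])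
qed

lemma bounded:
  assumes x0: "X1 \<le> x0"
  shows "\<Psi> x0 \<le> max (K * M * X1) (2 * A)"
proof (rule field_le_epsilon)
  fix e :: real assume e: "0 < e"
  define S where "S = max (K * M * X1) (2 * A)"
  have pos: "0 < S * x0 + 1" using A_nonneg X1_pos x0 by (simp add: S_def add_nonneg_pos)
  hence "0 < (S * x0 + 1) / e" using e by simp
  hence "\<Psi> x0 \<le> S * (1 + x0 / ((S * x0 + 1) / e))" unfolding S_def using x0 by (rule weighted_bound)
  also have "\<dots> = S + e * (S * x0 / (S * x0 + 1))" using pos by (simp add: field_simps)
  also have "\<dots> \<le> S + e * 1" using pos e by (intro add_left_mono mult_left_mono) auto
  finally show "\<Psi> x0 \<le> S + e" by simp
qed

lemma eventually_le:
  assumes e: "0 < e"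
  shows "eventually (\<lambda>x. \<Psi> x \<le> 2 * A + e) at_top"
proof -
  define S where "S = max (K * M * X1) (2 * A)"
  have S: "0 \<le> S" using A_nonneg by (simp add: S_def)
  have \<theta>_half: "\<theta> \<le> 1/2"
  proof (cases "0 \<le> \<theta>")
    case True
    have "\<theta> * 1 \<le> \<theta> * M" by (rule mult_left_mono[OF M_ge_1 True])
    thus ?thesis using contraction by linarith
  next
    case False thus ?thesis by linarith
  qed
  \<comment> \<open>each application of the recursion halves the excess over 2A\<close>
  have decay: "\<Psi> x \<le> 2 * A + S / 2 ^ k" if "M ^ k * X1 \<le> x" for k x
    using that
  proof (induction k arbitrary: x)
    case 0
    hence "\<Psi> x \<le> S" unfolding S_def by (intro bounded) simp
    thus ?case using A_nonneg by simp
  next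
    case (Suc k)
    have "1 \<le> M ^ Suc k" using M_ge_1 by (rule one_le_power)
    hence "X1 \<le> M ^ Suc k * X1" using X1_pos by simp
    hence x: "X1 \<le> x" using Suc.prems by linarith
    have "M ^ k * X1 \<le> x / M" using Suc.prems M_ge_1 by (simp add: field_simps)
    hence "\<Psi> x \<le> A + \<theta> * (2 * A + S / 2 ^ k)"
      by (intro recursion[OF x] Suc.IH) auto
    also have "\<theta> * (2 * A + S / 2 ^ k) \<le> 1/2 * (2 * A + S / 2 ^ k)"
      using A_nonneg S \<theta>_half by (intro mult_right_mono) auto
    finally show ?case by (simp add: field_simps)
  qed
  obtain k where "S / e < 2 ^ k" using real_arch_pow[of 2 "S / e"] by auto
  hence "S / 2 ^ k < e" using e by (simp add: field_simps)
  hence "\<Psi> x \<le> 2 * A + e" if "M ^ k * X1 \<le> x" for x using decay[OF that] by linarith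
  thus ?thesis unfolding eventually_at_top_linorder by blast
qed

end

definition window_mass :: "(real \<Rightarrow> real) \<Rightarrow> real \<Rightarrow> real \<Rightarrow> real" where
  "window_mass f M x = integral {x / M..M * x} (\<lambda>t. \<bar>f t\<bar>)"

lemma window_mass_nonneg: "0 \<le> window_mass f M x"
  unfolding window_mass_def
  by (cases "(\<lambda>t. \<bar>f t\<bar>) integrable_on {x / M..M * x}")
    (auto intro: integral_nonneg simp: not_integrable_integral)

lemma integral_tail_small:
  fixes f :: "real \<Rightarrow> real"
  assumes int: "\<And>u v. 0 \<le> u \<Longrightarrow> f integrable_on {u..v}"
    and lim: "((\<lambda>b. integral {0..b} f) \<longlongrightarrow> L) at_top" and \<epsilon>: "0 < \<epsilon>"
  shows "\<exists>X\<ge>0. \<forall>u v. X \<le> u \<longrightarrow> u \<le> v \<longrightarrow> \<bar>integral {u..v} f\<bar> \<le> \<epsilon>"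
proof -
  obtain X where X: "\<And>b. X \<le> b \<Longrightarrow> \<bar>integral {0..b} f - L\<bar> < \<epsilon> / 2"
    using tendstoD[OF lim, of "\<epsilon> / 2"] \<epsilon> by (auto simp: eventually_at_top_linorder dist_real_def)
  have "\<bar>integral {u..v} f\<bar> \<le> \<epsilon>" if "max X 0 \<le> u" "u \<le> v" for u v
  proof -
    have "integral {0..u} f + integral {u..v} f = integral {0..v} f"
      by (rule Henstock_Kurzweil_Integration.integral_combine) (use that in \<open>auto intro!: int\<close>)
    thus ?thesis using X[of u] X[of v] that by linarith
  qed
  thus ?thesis by (intro exI[of _ "max X 0"]) auto
qed

lemma tendsto_zero_of_eventually_le_multiple:
  fixes g :: "'a \<Rightarrow> real"
  assumes "\<And>\<epsilon>. 0 < \<epsilon> \<Longrightarrow> eventually (\<lambda>x. \<bar>g x\<bar> \<le> c * \<epsilon>) F"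
  shows "(g \<longlongrightarrow> 0) F"
proof (rule tendstoI)
  fix e :: real assume e: "0 < e"
  have "c * (e / (\<bar>c\<bar> + 1)) \<le> \<bar>c\<bar> * (e / (\<bar>c\<bar> + 1))"
    using e by (intro mult_right_mono) auto
  also have "\<dots> < e" using e by (simp add: field_simps)
  finally have "c * (e / (\<bar>c\<bar> + 1)) < e" .
  thus "eventually (\<lambda>x. dist (g x) 0 < e) F"
    using assms[of "e / (\<bar>c\<bar> + 1)"] e by (auto elim: eventually_mono)
qed

locale general_monotone =
  fixes f :: "real \<Rightarrow> real" and C lam :: real
  assumes absolutely_integrable: "\<And>u v. 0 \<le> u \<Longrightarrow> f absolutely_integrable_on {u..v}"
    and bv: "\<And>u v. 0 < u \<Longrightarrow> u \<le> v \<Longrightarrow> bv_on f u v"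
    and tendsto_zero: "(f \<longlongrightarrow> 0) at_top"
    and C_pos: "0 < C" and lam_gt_1: "1 < lam"
    and variation_le:
      "\<And>x. 0 < x \<Longrightarrow> total_variation f x (2 * x) \<le> C * integral {x / lam..lam * x} (\<lambda>t. \<bar>f t\<bar> / t)"

lemma GM_imp_general_monotone:
  assumes "GM f" shows "\<exists>C lam. general_monotone f C lam"
proof -
  obtain C lam where "C > 1" "lam > 1" and "\<forall>x>0. total_variation f x (2 * x)
      \<le> C * integral {x / lam .. lam * x} (\<lambda>t. \<bar>f t\<bar> / t)"
    using assms unfolding GM_def by blast
  moreover have "f absolutely_integrable_on {u..v}" if "0 \<le> u" for u v
  proof -
    have "f absolutely_integrable_on {0..max u v}" using assms that unfolding GM_def by auto
    thus ?thesis by (rule absolutely_integrable_on_subinterval) (use that in auto)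
  qed
  ultimately have "general_monotone f C lam" using assms unfolding GM_def general_monotone_def by auto
  thus ?thesis by blast
qed

context general_monotone
begin

lemma integrable: "0 \<le> u \<Longrightarrow> f integrable_on {u..v}"
  and integrable_abs: "0 \<le> u \<Longrightarrow> (\<lambda>t. \<bar>f t\<bar>) integrable_on {u..v}"
  using absolutely_integrable[of u v] unfolding absolutely_integrable_on_def by auto

lemma total_variation_le_window_mass:
  assumes y: "0 < y" and M: "lam \<le> M"
  shows "total_variation f y (2 * y) \<le> C * M / y * window_mass f M y"
proof -
  have "integral {y / lam..lam * y} (\<lambda>t. \<bar>f t\<bar> / t) \<le> M / y * window_mass f M y"
  proof (cases "(\<lambda>t. \<bar>f t\<bar> / t) integrable_on {y / lam..lam * y}")
    case False
    thus ?thesis using window_mass_nonneg[of f M y] y M lam_gt_1 by (simp add: not_integrable_integral)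
  next
    case True
    have "integral {y / lam..lam * y} (\<lambda>t. \<bar>f t\<bar> / t) \<le> integral {y / lam..lam * y} (\<lambda>t. lam / y * \<bar>f t\<bar>)"
    proof (rule integral_le[OF True])
      show "(\<lambda>t. lam / y * \<bar>f t\<bar>) integrable_on {y / lam..lam * y}"
        using integrable_on_cmult_left[OF integrable_abs[of "y / lam" "lam * y"], of "lam / y"] y lam_gt_1
        by simp
      fix t assume t: "t \<in> {y / lam..lam * y}"
      hence yt: "y \<le> lam * t" using lam_gt_1 by (simp add: field_simps)
      have "0 < lam * t" using y yt by linarith
      hence "0 < t" using lam_gt_1 by (simp add: zero_less_mult_iff)
      with yt show "\<bar>f t\<bar> / t \<le> lam / y * \<bar>f t\<bar>"
        using y mult_right_mono[OF yt abs_ge_zero[of "f t"]] by (simp add: field_simps)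
    qed
    also have "\<dots> \<le> lam / y * window_mass f M y"
      unfolding integral_mult_right window_mass_def using y lam_gt_1 M
      by (intro mult_left_mono integral_subset_le integrable_abs)
        (auto simp: field_simps intro: order_trans)
    also have "\<dots> \<le> M / y * window_mass f M y"
      using y M window_mass_nonneg[of f M y] by (intro mult_right_mono divide_right_mono) auto
    finally show ?thesis .
  qed
  thus ?thesis using variation_le[OF y] mult_left_mono[of _ _ C] C_pos by fastforce
qed

lemma integral_abs_doubling_le:
  fixes n :: nat and \<epsilon> :: real
  assumes y: "0 < y" and n: "0 < n" and M: "lam \<le> M"
    and small: "\<And>u v. y \<le> u \<Longrightarrow> u \<le> v \<Longrightarrow> v \<le> 2 * y \<Longrightarrow> \<bar>integral {u..v} f\<bar> \<le> \<epsilon>"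
  shows "integral {y..2 * y} (\<lambda>t. \<bar>f t\<bar>) \<le> n * \<epsilon> + C * M / n * window_mass f M y"
proof -
  define a where "a = (\<lambda>j::nat. y + real j * y / real n)"
  have mono: "a j \<le> a (Suc j)" for j using y n by (simp add: a_def divide_simps)
  have a0: "a 0 = y" and an: "a n = 2 * y" using n by (auto simp: a_def)
  have "integral {a 0..a n} (\<lambda>t. \<bar>f t\<bar>) = (\<Sum>j<n. integral {a j..a (Suc j)} (\<lambda>t. \<bar>f t\<bar>))"
    by (rule integral_sum_adjacent_intervals[of a, OF mono]) (use y a0 in \<open>auto intro!: integrable_abs\<close>)
  also have "\<dots> \<le> (\<Sum>j<n. \<epsilon> + y / n * total_variation f (a j) (a (Suc j)))"
  proof (rule sum_mono)
    fix j assume j: "j \<in> {..<n}"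
    have ge: "y \<le> a j" using y n by (simp add: a_def)
    have le: "a (Suc j) \<le> 2 * y"
      using j y n mult_right_mono[of "real (Suc j)" "real n" y] by (simp add: a_def divide_simps)
    have "integral {a j..a (Suc j)} (\<lambda>t. \<bar>f t\<bar>)
        \<le> \<bar>integral {a j..a (Suc j)} f\<bar> + (a (Suc j) - a j) * total_variation f (a j) (a (Suc j))"
      by (rule integral_abs_le_abs_integral_add_variation) (use mono[of j] ge y in \<open>auto intro!: bv integrable_abs\<close>)
    moreover have "a (Suc j) - a j = y / n" by (simp add: a_def add_divide_distrib algebra_simps)
    ultimately show "integral {a j..a (Suc j)} (\<lambda>t. \<bar>f t\<bar>) \<le> \<epsilon> + y / n * total_variation f (a j) (a (Suc j))"
      using small[OF ge mono[of j] le] by simp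
  qed
  also have "\<dots> = n * \<epsilon> + y / n * (\<Sum>j<n. total_variation f (a j) (a (Suc j)))"
    by (simp add: sum.distrib sum_distrib_left)
  also have "\<dots> \<le> n * \<epsilon> + y / n * total_variation f y (2 * y)"
    using sum_total_variation_le[of a f n, OF bv mono] y a0 an
    by (intro add_left_mono mult_left_mono) auto
  also have "\<dots> \<le> n * \<epsilon> + y / n * (C * M / y * window_mass f M y)"
    using total_variation_le_window_mass[OF y M] y by (intro add_left_mono mult_left_mono) auto
  also have "\<dots> = n * \<epsilon> + C * M / n * window_mass f M y" using y by simp
  finally show ?thesis unfolding a0 an .
qed

lemma window_mass_recursion:
  fixes p n :: nat and \<epsilon> B :: real
  assumes x: "0 < x" and n: "0 < n" and M: "lam \<le> 2 ^ p"
    and small: "\<And>u v. x / 2 ^ p \<le> u \<Longrightarrow> u \<le> v \<Longrightarrow> v \<le> 2 ^ p * x \<Longrightarrow> \<bar>integral {u..v} f\<bar> \<le> \<epsilon>"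
    and bound: "\<And>y. x / 2 ^ p \<le> y \<Longrightarrow> y \<le> 2 ^ p * x \<Longrightarrow> window_mass f (2 ^ p) y \<le> B"
  shows "window_mass f (2 ^ p) x \<le> 2 * p * n * \<epsilon> + 2 * p * C * 2 ^ p / n * B"
proof -
  define a :: "nat \<Rightarrow> real" where "a = (\<lambda>i. x * 2 ^ i / 2 ^ p)"
  have a_Suc: "a (Suc i) = 2 * a i" for i by (simp add: a_def)
  have a_pos: "0 < a i" for i using x by (simp add: a_def)
  have a_mono: "i \<le> j \<Longrightarrow> a i \<le> a j" for i j using x by (simp add: a_def divide_right_mono)
  have a0: "a 0 = x / 2 ^ p" by (simp add: a_def)
  have a_end: "a (2 * p) = 2 ^ p * x" by (simp add: a_def mult_2 power_add)
  have "window_mass f (2 ^ p) x = (\<Sum>i<2 * p. integral {a i..a (Suc i)} (\<lambda>t. \<bar>f t\<bar>))"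
    unfolding window_mass_def a0[symmetric] a_end[symmetric] using a_pos[of 0]
    by (intro integral_sum_adjacent_intervals a_mono integrable_abs) auto
  also have "\<dots> \<le> (\<Sum>i<2 * p. n * \<epsilon> + C * 2 ^ p / n * B)"
  proof (rule sum_mono)
    fix i assume "i \<in> {..<2 * p}"
    hence range: "x / 2 ^ p \<le> a i" "a (Suc i) \<le> 2 ^ p * x"
      using a_mono[of 0 i] a_mono[of "Suc i" "2 * p"] a0 a_end by auto
    have "integral {a i..2 * a i} (\<lambda>t. \<bar>f t\<bar>) \<le> n * \<epsilon> + C * 2 ^ p / n * window_mass f (2 ^ p) (a i)"
      using range a_Suc[of i] by (intro integral_abs_doubling_le a_pos n M small) auto
    also have "\<dots> \<le> n * \<epsilon> + C * 2 ^ p / n * B"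
      using bound[of "a i"] range a_mono[of i "Suc i"] C_pos by (intro add_left_mono mult_left_mono) auto
    finally show "integral {a i..a (Suc i)} (\<lambda>t. \<bar>f t\<bar>) \<le> n * \<epsilon> + C * 2 ^ p / n * B"
      unfolding a_Suc .
  qed
  also have "\<dots> = 2 * p * n * \<epsilon> + 2 * p * C * 2 ^ p / n * B" by (simp add: algebra_simps)
  finally show ?thesis .
qed

lemma window_mass_le_linear:
  assumes M: "1 \<le> M" and x: "0 \<le> x" and bounded: "\<And>t. x / M \<le> t \<Longrightarrow> \<bar>f t\<bar> \<le> 1"
  shows "window_mass f M x \<le> M * x"
proof -
  have "window_mass f M x \<le> integral {x / M..M * x} (\<lambda>t. 1)"
    unfolding window_mass_def using M x by (intro integral_le integrable_abs bounded) auto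
  also have "\<dots> \<le> M * x"
    using M x mult_left_mono[of 1 M x] mult_right_mono[of 1 M "x / M"] by (simp add: content_real)
  finally show ?thesis .
qed

lemma window_mass_eventually_le:
  fixes p n :: nat and \<epsilon> :: real
  assumes lim: "((\<lambda>b. integral {0..b} f) \<longlongrightarrow> L) at_top" and M: "lam \<le> 2 ^ p"
    and n: "4 * p * C * 2 ^ p * 2 ^ p \<le> n" and \<epsilon>: "0 < \<epsilon>"
  shows "eventually (\<lambda>x. window_mass f (2 ^ p) x \<le> (4 * p * n + 1) * \<epsilon>) at_top"
proof -
  define M :: real where "M = 2 ^ p"
  have M1: "1 \<le> M" using M lam_gt_1 by (simp add: M_def)
  have "p \<noteq> 0" using M lam_gt_1 by (cases p) auto
  hence "0 < 4 * p * C * M * M" using C_pos M1 by simp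
  hence n_pos: "0 < n" using n unfolding M_def by linarith
  define \<theta> where "\<theta> = 2 * p * C * M / n"
  have \<theta>: "\<theta> * M \<le> 1/2" using n n_pos unfolding \<theta>_def M_def by (simp add: field_simps)
  obtain X0 where X0: "\<And>u v. X0 \<le> u \<Longrightarrow> u \<le> v \<Longrightarrow> \<bar>integral {u..v} f\<bar> \<le> \<epsilon>"
    using integral_tail_small[OF integrable lim \<epsilon>] by blast
  obtain Xb where Xb: "\<And>t. Xb \<le> t \<Longrightarrow> \<bar>f t\<bar> \<le> 1"
    using tendstoD[OF tendsto_zero, of 1]
    by (auto simp: eventually_at_top_linorder dist_real_def intro: less_imp_le)
  define X1 where "X1 = M * max 1 (max X0 Xb)"
  have X1: "0 < X1" using M1 by (simp add: X1_def)
  have far: "max 1 (max X0 Xb) \<le> x / M" if "X1 \<le> x" for x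
  proof -
    have "max 1 (max X0 Xb) * M \<le> x" using that by (metis X1_def mult.commute)
    thus ?thesis using M1 by (intro pos_le_divide_eq[THEN iffD2]) auto
  qed
  interpret contracting_recursion "window_mass f M" M X1 M "2 * p * n * \<epsilon>" \<theta>
  proof
    show "window_mass f M x \<le> M * x" if "X1 \<le> x" for x
      using far[OF that] X1 that by (intro window_mass_le_linear M1 Xb) auto
    show "window_mass f M x \<le> 2 * p * n * \<epsilon> + \<theta> * B"
      if "X1 \<le> x" and "\<And>y. x / M \<le> y \<Longrightarrow> y \<le> M * x \<Longrightarrow> window_mass f M y \<le> B" for x B
      using far[OF that(1)] X1 that unfolding \<theta>_def M_def
      by (intro window_mass_recursion n_pos M X0) auto
  qed (use M1 X1 \<theta> \<epsilon> window_mass_nonneg in auto)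
  have "eventually (\<lambda>x. window_mass f M x \<le> 2 * (2 * p * n * \<epsilon>) + \<epsilon>) at_top"
    by (rule eventually_le[OF \<epsilon>])
  moreover have "2 * (2 * p * n * \<epsilon>) + \<epsilon> = (4 * p * n + 1) * \<epsilon>" by (simp add: algebra_simps)
  ultimately show ?thesis by (simp add: M_def)
qed

lemma window_mass_tendsto_zero:
  assumes lim: "((\<lambda>b. integral {0..b} f) \<longlongrightarrow> L) at_top" and M: "lam \<le> 2 ^ p"
  shows "(window_mass f (2 ^ p) \<longlongrightarrow> 0) at_top"
proof (rule tendsto_zero_of_eventually_le_multiple)
  define n where "n = nat \<lceil>4 * p * C * 2 ^ p * 2 ^ p\<rceil>"
  have n: "4 * p * C * 2 ^ p * 2 ^ p \<le> real n" unfolding n_def by linarith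
  show "eventually (\<lambda>x. \<bar>window_mass f (2 ^ p) x\<bar> \<le> (4 * p * n + 1) * \<epsilon>) at_top"
    if "0 < \<epsilon>" for \<epsilon> :: real
    using window_mass_eventually_le[OF lim M n that] by (simp add: abs_of_nonneg[OF window_mass_nonneg])
qed

lemma abs_mult_le_window_mass:
  assumes x: "0 < x" and M: "lam \<le> M" "2 \<le> M"
  shows "\<bar>x * f x\<bar> \<le> (1 + C * M) * window_mass f M x"
proof -
  define V where "V = total_variation f x (2 * x)"
  have "\<bar>f x\<bar> \<le> \<bar>f t\<bar> + V" if "t \<in> {x..2 * x}" for t
    using abs_diff_le_total_variation[OF bv[OF x], of "2 * x" x t] that x unfolding V_def by auto
  hence "integral {x..2 * x} (\<lambda>t. \<bar>f x\<bar>) \<le> integral {x..2 * x} (\<lambda>t. \<bar>f t\<bar> + V)"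
    using x by (intro integral_le integrable_add integrable_abs) auto
  also have "\<dots> = integral {x..2 * x} (\<lambda>t. \<bar>f t\<bar>) + x * V"
    using x integrable_abs[of x "2 * x"] by (subst integral_add) auto
  finally have "x * \<bar>f x\<bar> \<le> integral {x..2 * x} (\<lambda>t. \<bar>f t\<bar>) + x * V"
    using x by simp
  moreover have "integral {x..2 * x} (\<lambda>t. \<bar>f t\<bar>) \<le> window_mass f M x"
  proof -
    have "x / M \<le> x" "2 * x \<le> M * x" using x M by (auto simp: field_simps)
    thus ?thesis unfolding window_mass_def using x M
      by (intro integral_subset_le integrable_abs) auto
  qed
  moreover have "x * V \<le> C * M * window_mass f M x"
    using total_variation_le_window_mass[OF x M(1)] x unfolding V_def by (simp add: field_simps)
  moreover have "\<bar>x * f x\<bar> = x * \<bar>f x\<bar>" using x by (simp add: abs_mult)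
  ultimately show ?thesis by (simp add: distrib_right)
qed

lemma tendsto_mult_self_zero:
  assumes "((\<lambda>b. integral {0..b} f) \<longlongrightarrow> L) at_top"
  shows "((\<lambda>t. t * f t) \<longlongrightarrow> 0) at_top"
proof -
  obtain p where p: "lam < 2 ^ p" using real_arch_pow[of 2 lam] by auto
  have "p \<noteq> 0" using p lam_gt_1 by (cases p) auto
  hence "(2::real) ^ 1 \<le> 2 ^ p" by (intro power_increasing) auto
  hence M: "lam \<le> 2 ^ p" "2 \<le> (2::real) ^ p" using p by auto
  have "eventually (\<lambda>t. norm (t * f t) \<le> (1 + C * 2 ^ p) * window_mass f (2 ^ p) t) at_top"
    using eventually_gt_at_top[of 0]
    by (rule eventually_mono) (simp only: real_norm_def abs_mult_le_window_mass[OF _ M])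
  moreover have "((\<lambda>t. (1 + C * 2 ^ p) * window_mass f (2 ^ p) t) \<longlongrightarrow> 0) at_top"
    by (rule tendsto_mult_right_zero) (rule window_mass_tendsto_zero[OF assms M(1)])
  ultimately show ?thesis by (rule Lim_null_comparison)
qed

end

theorem theorem1:
  fixes f :: "real \<Rightarrow> real"
  assumes "GM f"
    and "\<exists>L. ((\<lambda>b. integral {0..b} f) \<longlongrightarrow> L) at_top"
  shows "((\<lambda>t. t * f t) \<longlongrightarrow> 0) at_top"
proof -
  obtain C lam where "general_monotone f C lam" using GM_imp_general_monotone[OF assms(1)] by blast
  moreover obtain L where "((\<lambda>b. integral {0..b} f) \<longlongrightarrow> L) at_top" using assms(2) by blast
  ultimately show ?thesis by (rule general_monotone.tendsto_mult_self_zero)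
qed

end
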